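(* Let $\mathbb{C}$ be a category with a bounded inclusion system. For each object $A$, let $\eta_A:A\to\mathsf{L}A$ be the maximal inclusion of $A$. Then this assignment makes $\mathbb{C}$ a local category.
   Context: Composition is diagrammatic. An inclusion system on a category is a family $\mathscr{N}$ of morphisms (inclusions) such that (I.1) identities are inclusions; (I.2) inclusions are monic; (I.3) any two parallel inclusions are equal; (I.4) inclusions are closed under composition; (I.5) for every inclusion $m:A\to B$ and every $f:C\to B$ a pullback of $m$ along $f$ exists and its leg $m':D\to C$ is an inclusion. It is bounded if for every object $A$ there exists a unique inclusion $\eta_A:A\to\mathsf{L}A$, called the maximal inclusion of $A$, such that whenever there is an inclusion $\mathsf{L}A\to B$, we have $B=\mathsf{L}A$. A local category is a category with, for each object $M$, an object $\mathsf{L}M$ and a morphism $\eta_M:M\to\mathsf{L}M$ such that (L.1) $\mathsf{L}\mathsf{L}M=\mathsf{L}M$ and $\eta_{\mathsf{L}M}=\mathrm{id}_{\mathsf{L}M}$; (L.2) each $\eta_M$ is monic; (L.3) for every $M$ and every $f:N\to\mathsf{L}M$ a pullback of $\eta_M$ along $f$ exists, with leg $m:P\to N$, such that $\mathsf{L}P=\mathsf{L}N$ and $m\eta_N=\eta_P$. *)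

theory Defs
  imports Main
begin

text \<open>A (small-or-large) category presented by its objects, arrows, domain, codomain,
identities and composition. Composition is diagrammatic: Comp C f g is "f then g",
meaningful when Cod f = Dom g.\<close>

record ('o, 'a) cat =
  Obj  :: "'o set"
  Arr  :: "'a set"
  Dom  :: "'a \<Rightarrow> 'o"
  Cod  :: "'a \<Rightarrow> 'o"
  Idm  :: "'o \<Rightarrow> 'a"
  Comp :: "'a \<Rightarrow> 'a \<Rightarrow> 'a"

definition hom :: "('o, 'a) cat \<Rightarrow> 'o \<Rightarrow> 'o \<Rightarrow> 'a set" where
  "hom C A B = {f \<in> Arr C. Dom C f = A \<and> Cod C f = B}"

definition category :: "('o, 'a) cat \<Rightarrow> bool" where
  "category C \<longleftrightarrow>
     (\<forall>f \<in> Arr C. Dom C f \<in> Obj C \<and> Cod C f \<in> Obj C) \<and>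
     (\<forall>A \<in> Obj C. Idm C A \<in> hom C A A) \<and>
     (\<forall>f \<in> Arr C. \<forall>g \<in> Arr C. Cod C f = Dom C g \<longrightarrow>
         Comp C f g \<in> hom C (Dom C f) (Cod C g)) \<and>
     (\<forall>f \<in> Arr C. Comp C (Idm C (Dom C f)) f = f \<and> Comp C f (Idm C (Cod C f)) = f) \<and>
     (\<forall>f \<in> Arr C. \<forall>g \<in> Arr C. \<forall>h \<in> Arr C. Cod C f = Dom C g \<longrightarrow> Cod C g = Dom C h \<longrightarrow>
         Comp C (Comp C f g) h = Comp C f (Comp C g h))"

definition monic :: "('o, 'a) cat \<Rightarrow> 'a \<Rightarrow> bool" where
  "monic C m \<longleftrightarrow> m \<in> Arr C \<and>
     (\<forall>g \<in> Arr C. \<forall>h \<in> Arr C. Cod C g = Dom C m \<longrightarrow> Cod C h = Dom C m \<longrightarrow>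
        Dom C g = Dom C h \<longrightarrow> Comp C g m = Comp C h m \<longrightarrow> g = h)"

definition is_pullback :: "('o, 'a) cat \<Rightarrow> 'a \<Rightarrow> 'a \<Rightarrow> 'a \<Rightarrow> 'a \<Rightarrow> bool" where
  "is_pullback C m f m' f' \<longleftrightarrow>
     m \<in> Arr C \<and> f \<in> Arr C \<and> Cod C m = Cod C f \<and>
     m' \<in> hom C (Dom C m') (Dom C f) \<and>
     f' \<in> hom C (Dom C m') (Dom C m) \<and>
     Comp C f' m = Comp C m' f \<and>
     (\<forall>x \<in> Arr C. \<forall>y \<in> Arr C.
        Cod C x = Dom C f \<longrightarrow> Cod C y = Dom C m \<longrightarrow> Dom C x = Dom C y \<longrightarrow>
        Comp C x f = Comp C y m \<longrightarrow>
        (\<exists>!u. u \<in> hom C (Dom C x) (Dom C m') \<and> Comp C u m' = x \<and> Comp C u f' = y))"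

definition inclusion_system :: "('o, 'a) cat \<Rightarrow> 'a set \<Rightarrow> bool" where
  "inclusion_system C N \<longleftrightarrow>
     N \<subseteq> Arr C \<and>
     (\<forall>A \<in> Obj C. Idm C A \<in> N) \<and>
     (\<forall>m \<in> N. monic C m) \<and>
     (\<forall>m \<in> N. \<forall>n \<in> N. Dom C m = Dom C n \<longrightarrow> Cod C m = Cod C n \<longrightarrow> m = n) \<and>
     (\<forall>m \<in> N. \<forall>n \<in> N. Cod C m = Dom C n \<longrightarrow> Comp C m n \<in> N) \<and>
     (\<forall>m \<in> N. \<forall>f \<in> Arr C. Cod C f = Cod C m \<longrightarrow>
        (\<exists>m' f'. is_pullback C m f m' f' \<and> m' \<in> N))"

definition maximal_inclusion :: "('o, 'a) cat \<Rightarrow> 'a set \<Rightarrow> 'o \<Rightarrow> 'a \<Rightarrow> bool" where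
  "maximal_inclusion C N A eta \<longleftrightarrow>
     eta \<in> N \<and> Dom C eta = A \<and>
     (\<forall>i \<in> N. Dom C i = Cod C eta \<longrightarrow> Cod C i = Cod C eta)"

definition bounded_inclusion_system :: "('o, 'a) cat \<Rightarrow> 'a set \<Rightarrow> bool" where
  "bounded_inclusion_system C N \<longleftrightarrow>
     inclusion_system C N \<and> (\<forall>A \<in> Obj C. \<exists>!eta. maximal_inclusion C N A eta)"

definition local_category :: "('o, 'a) cat \<Rightarrow> ('o \<Rightarrow> 'o) \<Rightarrow> ('o \<Rightarrow> 'a) \<Rightarrow> bool" where
  "local_category C L eta \<longleftrightarrow>
     category C \<and>
     (\<forall>M \<in> Obj C. L M \<in> Obj C \<and> eta M \<in> hom C M (L M)) \<and>
     (\<forall>M \<in> Obj C. L (L M) = L M \<and> eta (L M) = Idm C (L M)) \<and>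
     (\<forall>M \<in> Obj C. monic C (eta M)) \<and>
     (\<forall>M \<in> Obj C. \<forall>N \<in> Obj C. \<forall>f \<in> hom C N (L M).
        (\<exists>m q. is_pullback C (eta M) f m q \<and>
               L (Dom C m) = L N \<and> Comp C m (eta N) = eta (Dom C m)))"

end

theory Submission
  imports Defs
begin

text \<open>An inclusion out of B whose codomain is a maximal object is, by uniqueness, the maximal
inclusion of B. The identity of LA is such an inclusion, which gives (L.1). Pulling back
\<eta>_M along f : N \<rightarrow> LM gives an inclusion m : P \<rightarrow> N by (I.5), and m;\<eta>_N is again
an inclusion into the maximal object LN, so it is \<eta>_P; this gives (L.3).\<close>

lemma category_comp_in_hom:
  assumes "category C" "f \<in> Arr C" "g \<in> Arr C" "Cod C f = Dom C g"
  shows "Comp C f g \<in> hom C (Dom C f) (Cod C g)"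
  using assms unfolding category_def by blast

lemma inclusion_system_Idm:
  "inclusion_system C N \<Longrightarrow> A \<in> Obj C \<Longrightarrow> Idm C A \<in> N"
  unfolding inclusion_system_def by blast

lemma inclusion_system_comp:
  "inclusion_system C N \<Longrightarrow> m \<in> N \<Longrightarrow> n \<in> N \<Longrightarrow> Cod C m = Dom C n \<Longrightarrow> Comp C m n \<in> N"
  unfolding inclusion_system_def by blast

lemma maximal_inclusion_monic:
  "inclusion_system C N \<Longrightarrow> maximal_inclusion C N A e \<Longrightarrow> monic C e"
  unfolding inclusion_system_def maximal_inclusion_def by blast

lemma inclusion_system_pullback:
  assumes "inclusion_system C N" "m \<in> N" "f \<in> Arr C" "Cod C f = Cod C m"
  obtains m' f' where "is_pullback C m f m' f'" "m' \<in> N"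
  using assms unfolding inclusion_system_def by blast

lemma maximal_inclusion_in_hom:
  assumes "category C" "inclusion_system C N" "maximal_inclusion C N A e"
  shows "e \<in> hom C A (Cod C e)" and "Cod C e \<in> Obj C"
proof -
  have "e \<in> Arr C" "Dom C e = A"
    using assms(2,3) unfolding inclusion_system_def maximal_inclusion_def by auto
  then show "e \<in> hom C A (Cod C e)" "Cod C e \<in> Obj C"
    using assms(1) unfolding category_def hom_def by auto
qed

lemma maximal_inclusion_unique:
  assumes "bounded_inclusion_system C N" "A \<in> Obj C"
    and "maximal_inclusion C N A e" "maximal_inclusion C N A e'"
  shows "e = e'"
  using assms unfolding bounded_inclusion_system_def by blast

lemma maximal_inclusion_comp:
  assumes "category C" "inclusion_system C N"
    and "i \<in> N" "Cod C i = A" "maximal_inclusion C N A e"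
  shows "maximal_inclusion C N (Dom C i) (Comp C i e)"
proof -
  have e: "e \<in> N" "Dom C e = A"
    using assms(5) unfolding maximal_inclusion_def by auto
  have "i \<in> Arr C" "e \<in> Arr C"
    using assms(2,3) e(1) unfolding inclusion_system_def by auto
  then have "Comp C i e \<in> hom C (Dom C i) (Cod C e)"
    using category_comp_in_hom assms(1,4) e(2) by metis
  moreover have "Comp C i e \<in> N"
    using inclusion_system_comp assms(2-4) e by metis
  ultimately show ?thesis
    using assms(5) unfolding maximal_inclusion_def hom_def by auto
qed

lemma maximal_inclusion_Idm_of_Cod:
  assumes "category C" "inclusion_system C N" "maximal_inclusion C N A e"
  shows "maximal_inclusion C N (Cod C e) (Idm C (Cod C e))"
proof -
  have "Cod C e \<in> Obj C"
    using maximal_inclusion_in_hom(2)[OF assms] .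
  then have "Idm C (Cod C e) \<in> N" "Idm C (Cod C e) \<in> hom C (Cod C e) (Cod C e)"
    using assms(1,2) inclusion_system_Idm unfolding category_def by auto
  then show ?thesis
    using assms(3) unfolding maximal_inclusion_def hom_def by auto
qed

lemma maximal_inclusion_of_maximal_object:
  assumes "category C" "bounded_inclusion_system C N"
    and "maximal_inclusion C N A e" "maximal_inclusion C N (Cod C e) e'"
  shows "e' = Idm C (Cod C e)"
proof -
  have incl: "inclusion_system C N"
    using assms(2) unfolding bounded_inclusion_system_def by blast
  show ?thesis
    using maximal_inclusion_unique[OF assms(2) maximal_inclusion_in_hom(2)[OF assms(1) incl assms(3)]
        assms(4) maximal_inclusion_Idm_of_Cod[OF assms(1) incl assms(3)]] .
qed

lemma maximal_inclusion_pullback: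
  assumes cat: "category C" and bounded: "bounded_inclusion_system C N"
    and max: "\<forall>A \<in> Obj C. maximal_inclusion C N A (eta A)"
    and e: "maximal_inclusion C N M e" and f: "f \<in> Arr C" "Cod C f = Cod C e"
  obtains m q where "is_pullback C e f m q" and "Dom C m \<in> Obj C"
    and "Cod C (eta (Dom C m)) = Cod C (eta (Dom C f))"
    and "Comp C m (eta (Dom C f)) = eta (Dom C m)"
proof -
  have incl: "inclusion_system C N"
    using bounded unfolding bounded_inclusion_system_def by blast
  have "e \<in> N"
    using e unfolding maximal_inclusion_def by blast
  then obtain m q where pb: "is_pullback C e f m q" and "m \<in> N"
    using inclusion_system_pullback[OF incl _ f] by metis
  then have m: "m \<in> hom C (Dom C m) (Dom C f)"
    unfolding is_pullback_def by blast
  then have D: "Dom C m \<in> Obj C" and K: "Dom C f \<in> Obj C"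
    using cat f(1) unfolding category_def hom_def by auto
  have "maximal_inclusion C N (Dom C m) (Comp C m (eta (Dom C f)))"
    using maximal_inclusion_comp[OF cat incl \<open>m \<in> N\<close> _ max[rule_format, OF K]] m
    unfolding hom_def by auto
  then have eq: "Comp C m (eta (Dom C f)) = eta (Dom C m)"
    using maximal_inclusion_unique[OF bounded D _ max[rule_format, OF D]] by blast
  have "eta (Dom C f) \<in> Arr C" "Dom C (eta (Dom C f)) = Dom C f"
    using maximal_inclusion_in_hom(1)[OF cat incl max[rule_format, OF K]] unfolding hom_def by auto
  then have "Cod C (Comp C m (eta (Dom C f))) = Cod C (eta (Dom C f))"
    using category_comp_in_hom[OF cat] m unfolding hom_def by auto
  with pb D eq show ?thesis
    using that by simp
qed

theorem proposition12p5:
  fixes C :: "('o, 'a) cat" and N :: "'a set"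
    and L :: "'o \<Rightarrow> 'o" and eta :: "'o \<Rightarrow> 'a"
  assumes cat: "category C"
    and bounded: "bounded_inclusion_system C N"
    and eta: "\<forall>A \<in> Obj C. maximal_inclusion C N A (eta A) \<and> L A = Cod C (eta A)"
  shows "local_category C L eta"
proof -
  have incl: "inclusion_system C N"
    using bounded unfolding bounded_inclusion_system_def by blast
  have max: "\<forall>A \<in> Obj C. maximal_inclusion C N A (eta A)"
    using eta by blast
  have eta_hom: "L A \<in> Obj C \<and> eta A \<in> hom C A (L A)" if "A \<in> Obj C" for A
    using maximal_inclusion_in_hom[OF cat incl] eta that by auto
  have L_idem: "L (L M) = L M \<and> eta (L M) = Idm C (L M)" if M: "M \<in> Obj C" for M
  proof -
    have "eta (L M) = Idm C (L M)"
      using maximal_inclusion_of_maximal_object[OF cat bounded] eta eta_hom M by metis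
    then show ?thesis
      using eta eta_hom[OF M] cat unfolding category_def hom_def by auto
  qed
  have L_pullback: "\<exists>m q. is_pullback C (eta M) f m q \<and>
      L (Dom C m) = L K \<and> Comp C m (eta K) = eta (Dom C m)"
    if M: "M \<in> Obj C" and K: "K \<in> Obj C" and f: "f \<in> hom C K (L M)" for M K f
  proof -
    have "f \<in> Arr C" "Cod C f = Cod C (eta M)" "Dom C f = K"
      using f eta M unfolding hom_def by auto
    then obtain m q where "is_pullback C (eta M) f m q" "Dom C m \<in> Obj C"
      and "Cod C (eta (Dom C m)) = Cod C (eta K)" "Comp C m (eta K) = eta (Dom C m)"
      using maximal_inclusion_pullback[OF cat bounded max] max M by metis
    then show ?thesis
      using eta K by auto
  qed
  show ?thesis
    unfolding local_category_def
    using cat eta_hom L_idem maximal_inclusion_monic[OF incl] max L_pullback by blast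
qed

end
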